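(* Suppose Assumptions (A1) and (A2) hold. For every $C>0$ and every nonempty $\mathscr{S}\in\mathcal{A}(k)$, $$\inf_{T\in\mathcal{T}^{1/2}_{\mathscr{S}}}\sup_{\tau\in\mathrm{Lip}_C(\mathbb{R}^d)}\mathcal{R}(T,\mathscr{S},\tau)\ge\frac{C}{2}\,\frac{1}{\#\mathcal{S}_P}\sum_{s\in\mathcal{S}_P\setminus\mathscr{S}}\|X_s-X_{N_{\mathscr{S}}(s)}\|.$$
   Context: Sites are indexed by $\mathcal{S}=\{1,\dots,S\}$. $\mathcal{S}_E\subseteq\mathcal{S}$ has $\mathrm{card}(\mathcal{S}_E)\ge2$, and $\mathcal{S}_P\subseteq\mathcal{S}$ is nonempty, with $\#\mathcal{S}_P=\mathrm{card}(\mathcal{S}_P)$. Each site $s$ has covariates $X_s\in\mathbb{R}^d$ and a known standard deviation $\sigma_s>0$. $\|\cdot\|$ is the Euclidean norm, and $\mathrm{Lip}_C(\mathbb{R}^d)$ is the set of $C$-Lipschitz functions $\mathbb{R}^d\to\mathbb{R}$ with respect to $\|\cdot\|$. (A1): the true conditional treatment effect function $\tau$ lies in $\mathrm{Lip}_C(\mathbb{R}^d)$. (A2): the $X_s$ are pairwise distinct. Fix an integer $1\le k<\mathrm{card}(\mathcal{S}_E)$ and set $\mathcal{A}(k)=\{\mathscr{S}\subset\mathcal{S}_E:\mathrm{card}(\mathscr{S})\le k\}$. For a nonempty $\mathscr{S}$ with elements $\mathscr{S}_1<\dots<\mathscr{S}_m$, the data are $\hat\tau_{\mathscr{S}}\sim\mathcal{N}_m(\tau_{\mathscr{S}},\mathrm{diag}(\sigma^2_{\mathscr{S}_1},\dots,\sigma^2_{\mathscr{S}_m}))$,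 where $\tau_{\mathscr{S}}=(\tau(X_{\mathscr{S}_i}))_{i=1}^m$. A treatment rule is a measurable map $T:\mathbb{R}^m\to[0,1]^{\#\mathcal{S}_P}$ with components $T_s$, $s\in\mathcal{S}_P$. $\mathcal{T}^{1/2}_{\mathscr{S}}$ is the set of treatment rules with $\mathbb{E}[T_s(U)]=1/2$ for all $s\in\mathcal{S}_P$ whenever $U\sim\mathcal{N}_m(0,\Sigma)$, for every positive definite diagonal $\Sigma$. Regret is $\mathcal{R}(T,\mathscr{S},\tau)=\frac{1}{\#\mathcal{S}_P}\sum_{s\in\mathcal{S}_P}\tau(X_s)\big(\mathbf{1}\{\tau(X_s)\ge0\}-\mathbb{E}_{\tau_{\mathscr{S}}}[T_s(\hat\tau_{\mathscr{S}})]\big)$. $N_{\mathscr{S}}(s)$ is the nearest neighbor of $s$ in $\mathscr{S}$ in Euclidean distance of covariates, with the smallest index chosen under ties. *)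

theory Defs
  imports "HOL-Analysis.Analysis" "HOL-Probability.Probability"
begin

text \<open>Sites are natural numbers; a vector in R^m indexed by the sites of a set Ss
  is a function nat => real (extensional on Ss), i.e. an element of the product space.\<close>

definition gauss_meas :: "nat set \<Rightarrow> (nat \<Rightarrow> real) \<Rightarrow> (nat \<Rightarrow> real) \<Rightarrow> (nat \<Rightarrow> real) measure" where
  "gauss_meas Ss mu sd = PiM Ss (\<lambda>i. density lborel (normal_density (mu i) (sd i)))"

definition treatment_rule :: "nat set \<Rightarrow> nat set \<Rightarrow> ((nat \<Rightarrow> real) \<Rightarrow> nat \<Rightarrow> real) \<Rightarrow> bool" where
  "treatment_rule Ss SP T \<longleftrightarrow>
     (\<forall>s\<in>SP. (\<lambda>u. T u s) \<in> borel_measurable (PiM Ss (\<lambda>_. lborel))) \<and>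
     (\<forall>u\<in>space (PiM Ss (\<lambda>_. lborel)). \<forall>s\<in>SP. 0 \<le> T u s \<and> T u s \<le> 1)"

definition half_rules :: "nat set \<Rightarrow> nat set \<Rightarrow> ((nat \<Rightarrow> real) \<Rightarrow> nat \<Rightarrow> real) set" where
  "half_rules Ss SP = {T. treatment_rule Ss SP T \<and>
     (\<forall>sd. (\<forall>i\<in>Ss. sd i > 0) \<longrightarrow>
        (\<forall>s\<in>SP. integral\<^sup>L (gauss_meas Ss (\<lambda>_. 0) sd) (\<lambda>u. T u s) = 1/2))}"

definition regret :: "nat set \<Rightarrow> (nat \<Rightarrow> 'a) \<Rightarrow> (nat \<Rightarrow> real) \<Rightarrow> ((nat \<Rightarrow> real) \<Rightarrow> nat \<Rightarrow> real)
    \<Rightarrow> nat set \<Rightarrow> ('a \<Rightarrow> real) \<Rightarrow> real" where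
  "regret SP X sd T Ss tau =
     (1 / real (card SP)) * (\<Sum>s\<in>SP. tau (X s) *
        ((if tau (X s) \<ge> 0 then 1 else 0)
         - integral\<^sup>L (gauss_meas Ss (\<lambda>i. tau (X i)) sd) (\<lambda>u. T u s)))"

definition nn_site :: "nat set \<Rightarrow> (nat \<Rightarrow> 'a::metric_space) \<Rightarrow> nat \<Rightarrow> nat" where
  "nn_site Ss X s = (LEAST j. j \<in> Ss \<and> (\<forall>i\<in>Ss. dist (X s) (X j) \<le> dist (X s) (X i)))"

end

theory Submission
  imports Defs
begin

text \<open>The adversary picks \<open>\<tau> x = C * infdist x (X ` Ss)\<close>, which is \<open>C\<close>-Lipschitz and
  vanishes at every sampled site. The data are then centred Gaussians, so every rule with
  null-mean \<open>1/2\<close> treats each site with probability \<open>1/2\<close>, and the regret is half the average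
  of \<open>\<tau> \<ge> 0\<close> over the policy sites; at an unsampled site \<open>\<tau>\<close> is \<open>C\<close> times the
  nearest-neighbour distance.\<close>

lemma lipschitz_on_infdist: "1-lipschitz_on U (\<lambda>x. infdist x A)"
  by (rule lipschitz_onI) (simp_all add: dist_real_def infdist_triangle_abs)

lemma nn_site_minimal:
  assumes "finite Ss" "Ss \<noteq> {}"
  shows "nn_site Ss X s \<in> Ss" "\<And>i. i \<in> Ss \<Longrightarrow> dist (X s) (X (nn_site Ss X s)) \<le> dist (X s) (X i)"
proof -
  let ?d = "\<lambda>i. dist (X s) (X i)"
  have "Min (?d ` Ss) \<in> ?d ` Ss"
    using assms by (intro Min_in) auto
  then obtain j where "j \<in> Ss" "?d j = Min (?d ` Ss)"
    by auto
  with assms have "j \<in> Ss \<and> (\<forall>i\<in>Ss. ?d j \<le> ?d i)"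
    by auto
  then have "nn_site Ss X s \<in> Ss \<and> (\<forall>i\<in>Ss. ?d (nn_site Ss X s) \<le> ?d i)"
    unfolding nn_site_def by (rule LeastI)
  then show "nn_site Ss X s \<in> Ss" "\<And>i. i \<in> Ss \<Longrightarrow> ?d (nn_site Ss X s) \<le> ?d i"
    by auto
qed

lemma infdist_image_eq_dist_nn_site:
  assumes "finite Ss" "Ss \<noteq> {}"
  shows "infdist (X s) (X ` Ss) = dist (X s) (X (nn_site Ss X s))"
proof (rule antisym)
  show "infdist (X s) (X ` Ss) \<le> dist (X s) (X (nn_site Ss X s))"
    using nn_site_minimal(1)[OF assms] by (intro infdist_le imageI)
  show "dist (X s) (X (nn_site Ss X s)) \<le> infdist (X s) (X ` Ss)"
    using assms by (subst infdist_notempty) (auto intro!: cINF_greatest nn_site_minimal(2))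
qed

lemma regret_half_rule_vanishing:
  assumes T: "T \<in> half_rules Ss SP"
    and sd_pos: "\<And>i. i \<in> Ss \<Longrightarrow> sd i > 0"
    and vanish: "\<And>i. i \<in> Ss \<Longrightarrow> tau (X i) = 0"
    and nonneg: "\<And>x. tau x \<ge> 0"
  shows "regret SP X sd T Ss tau = 1 / real (card SP) * (\<Sum>s\<in>SP. tau (X s) / 2)"
proof -
  have centred: "gauss_meas Ss (\<lambda>i. tau (X i)) sd = gauss_meas Ss (\<lambda>_. 0) sd"
    unfolding gauss_meas_def by (rule PiM_cong) (simp_all add: vanish)
  have "integral\<^sup>L (gauss_meas Ss (\<lambda>_. 0) sd) (\<lambda>u. T u s) = 1/2" if "s \<in> SP" for s
    using T sd_pos that unfolding half_rules_def by blast
  then show ?thesis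
    unfolding regret_def centred using nonneg by (intro arg_cong2[where f="(*)"] sum.cong) auto
qed

theorem lemma2:
  fixes S :: nat and SE SP Ss :: "nat set" and X :: "nat \<Rightarrow> real ^ 'd"
    and sd :: "nat \<Rightarrow> real" and k :: nat and C :: real
  assumes SE_sub: "SE \<subseteq> {1..S}" and SE_card: "card SE \<ge> 2"
    and SP_sub: "SP \<subseteq> {1..S}" and SP_ne: "SP \<noteq> {}"
    and sd_pos: "\<forall>s\<in>{1..S}. sd s > 0"
    and A2: "inj_on X {1..S}"
    and k1: "1 \<le> k" and k2: "k < card SE"
    and C_pos: "C > 0"
    and Ss_sub: "Ss \<subseteq> SE" and Ss_card: "card Ss \<le> k" and Ss_ne: "Ss \<noteq> {}"
  shows "(INF T\<in>half_rules Ss SP. SUP tau\<in>{tau. C-lipschitz_on UNIV tau}. ereal (regret SP X sd T Ss tau))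
           \<ge> ereal (C / 2 * (1 / real (card SP)) *
                (\<Sum>s\<in>SP - Ss. norm (X s - X (nn_site Ss X s))))"
proof (rule INF_greatest)
  fix T assume T: "T \<in> half_rules Ss SP"
  define tau where "tau x = C * infdist x (X ` Ss)" for x
  have fin_Ss: "finite Ss" and fin_SP: "finite SP"
    using Ss_sub SE_sub SP_sub by (auto intro: finite_subset)
  have lip: "C-lipschitz_on UNIV tau"
    using lipschitz_on_cmult_real_nonneg[OF lipschitz_on_infdist, of C] C_pos
    by (simp add: tau_def)
  have nonneg: "tau x \<ge> 0" for x
    using C_pos by (simp add: tau_def infdist_nonneg)
  have tau_nn: "tau (X s) = C * norm (X s - X (nn_site Ss X s))" for s
    by (simp add: tau_def infdist_image_eq_dist_nn_site[OF fin_Ss Ss_ne] dist_norm)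
  have "C / 2 * (1 / real (card SP)) * (\<Sum>s\<in>SP - Ss. norm (X s - X (nn_site Ss X s)))
      = 1 / real (card SP) * (\<Sum>s\<in>SP - Ss. tau (X s) / 2)"
    by (simp add: tau_nn sum_distrib_left sum_divide_distrib mult.commute)
  also have "\<dots> \<le> 1 / real (card SP) * (\<Sum>s\<in>SP. tau (X s) / 2)"
    using fin_SP nonneg by (intro mult_left_mono sum_mono2) auto
  also have "\<dots> = regret SP X sd T Ss tau"
    using sd_pos Ss_sub SE_sub nonneg
    by (intro regret_half_rule_vanishing[symmetric, OF T]) (auto simp: tau_def)
  finally show "ereal (C / 2 * (1 / real (card SP)) * (\<Sum>s\<in>SP - Ss. norm (X s - X (nn_site Ss X s))))
      \<le> (SUP tau\<in>{tau. C-lipschitz_on UNIV tau}. ereal (regret SP X sd T Ss tau))"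
    using lip by (intro SUP_upper2[where i=tau]) auto
qed

end
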